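(* Let $n>4$ be an integer. The tournament $U_n$ has exactly two sparse orderings. Specifically, if $n$ is even, these are $\Pi(U_n)=\langle v_1,P(2),P(4),\dots,P(n-2),v_n\rangle$ and $\Pi_{1,n}(U_n)=\langle P(1),P(3),\dots,P(n-1)\rangle$; if $n$ is odd, these are $\Pi_1(U_n)=\langle P(1),P(3),\dots,P(n-2),v_n\rangle$ and $\Pi_n(U_n)=\langle v_1,P(2),P(4),\dots,P(n-3),P(n-1)\rangle$, where for $k\in[n-1]$, $P(k)$ denotes the two consecutive vertices $\langle v_{k+1},v_k\rangle$ (written in this order) and concatenation of such blocks gives the ordering.
   Context: For $n\ge1$, $U_n$ is the tournament with vertex set $\{v_1,\dots,v_n\}$ and arc set $\{(v_{i+1},v_i): i\in[n-1]\}\cup\{(v_i,v_j): 1\le i<n,\ i+1<j\le n\}$. For an ordering $\sigma$ of the vertices, an arc $(x,y)$ is backward if $y$ comes before $x$ in $\sigma$. An ordering is sparse if every vertex is incident to at most one backward arc. *)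

theory Defs
  imports Main
begin

text \<open>Vertex v_i of U_n is represented by the natural number i, so the vertex set is {1..n}.
  A digraph is given by its arc relation A (A x y means (x,y) is an arc).\<close>

definition U_arc :: "nat \<Rightarrow> nat \<Rightarrow> nat \<Rightarrow> bool" where
  "U_arc n x y \<longleftrightarrow>
     (\<exists>i. 1 \<le> i \<and> i \<le> n - 1 \<and> x = i + 1 \<and> y = i) \<or>
     (\<exists>i j. 1 \<le> i \<and> i < n \<and> i + 1 < j \<and> j \<le> n \<and> x = i \<and> y = j)"

definition is_ordering :: "'a set \<Rightarrow> 'a list \<Rightarrow> bool" where
  "is_ordering V \<sigma> \<longleftrightarrow> distinct \<sigma> \<and> set \<sigma> = V"

definition comes_before :: "'a list \<Rightarrow> 'a \<Rightarrow> 'a \<Rightarrow> bool" where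
  "comes_before \<sigma> a b \<longleftrightarrow> (\<exists>i j. i < j \<and> j < length \<sigma> \<and> \<sigma> ! i = a \<and> \<sigma> ! j = b)"

definition backward_arcs :: "('a \<Rightarrow> 'a \<Rightarrow> bool) \<Rightarrow> 'a list \<Rightarrow> ('a \<times> 'a) set" where
  "backward_arcs A \<sigma> = {(x, y). A x y \<and> comes_before \<sigma> y x}"

definition sparse_ordering :: "'a set \<Rightarrow> ('a \<Rightarrow> 'a \<Rightarrow> bool) \<Rightarrow> 'a list \<Rightarrow> bool" where
  "sparse_ordering V A \<sigma> \<longleftrightarrow> is_ordering V \<sigma> \<and>
     (\<forall>v \<in> V. card {e \<in> backward_arcs A \<sigma>. fst e = v \<or> snd e = v} \<le> 1)"

definition P_block :: "nat \<Rightarrow> nat list" where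
  "P_block k = [k + 1, k]"

definition Pi_even :: "nat \<Rightarrow> nat list" where
  "Pi_even n = [1] @ concat (map (\<lambda>i. P_block (2 * i)) [1..<n div 2]) @ [n]"

definition Pi_1n_even :: "nat \<Rightarrow> nat list" where
  "Pi_1n_even n = concat (map (\<lambda>i. P_block (2 * i + 1)) [0..<n div 2])"

definition Pi_1_odd :: "nat \<Rightarrow> nat list" where
  "Pi_1_odd n = concat (map (\<lambda>i. P_block (2 * i + 1)) [0..<n div 2]) @ [n]"

definition Pi_n_odd :: "nat \<Rightarrow> nat list" where
  "Pi_n_odd n = [1] @ concat (map (\<lambda>i. P_block (2 * i)) [1..<n div 2 + 1])"

end

theory Submission
  imports Defs
begin

text \<open>
  In a sparse ordering of U_n with n \<ge> 5 no long arc v_x v_y (y \<ge> x + 2) is backward: all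
  other arcs at v_x and v_y would be forward, and two of them close a directed triangle with the
  reversed arc. Hence of two consecutive short arcs v_(i+1) v_i and v_(i+2) v_(i+1) exactly one
  is backward: not both, as they share v_(i+1), and not neither, as with the forward arc
  v_i v_(i+2) they would form a cycle. So the backward arcs are the short arcs v_(y+1) v_y with
  y of one fixed parity, and this determines the ordering: it sorts the vertices by the key
  \<^term>\<open>rank b\<close> below. Conversely, both orderings of this form are sparse.
\<close>

lemma comes_before_in_set: "comes_before \<sigma> a b \<Longrightarrow> a \<in> set \<sigma> \<and> b \<in> set \<sigma>"
  unfolding comes_before_def by auto

lemma comes_before_asym: "distinct \<sigma> \<Longrightarrow> comes_before \<sigma> a b \<Longrightarrow> \<not> comes_before \<sigma> b a"
  unfolding comes_before_def by (metis nth_eq_iff_index_eq order.strict_trans not_less_iff_gr_or_eq)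

lemma comes_before_trans:
  "distinct \<sigma> \<Longrightarrow> comes_before \<sigma> a b \<Longrightarrow> comes_before \<sigma> b c \<Longrightarrow> comes_before \<sigma> a c"
  unfolding comes_before_def by (metis nth_eq_iff_index_eq order.strict_trans)

lemma comes_before_total:
  "a \<in> set \<sigma> \<Longrightarrow> b \<in> set \<sigma> \<Longrightarrow> a \<noteq> b \<Longrightarrow> comes_before \<sigma> a b \<or> comes_before \<sigma> b a"
  unfolding comes_before_def in_set_conv_nth by (metis linorder_neqE_nat)

lemma sorted_wrt_comes_before: "sorted_wrt (comes_before \<sigma>) \<sigma>"
  unfolding sorted_wrt_iff_nth_less comes_before_def by blast

lemma comes_before_sorted_key_iff:
  assumes "sorted_wrt (\<lambda>x y. f x < f y) \<tau>" "a \<in> set \<tau>" "b \<in> set \<tau>"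
  shows "comes_before \<tau> a b \<longleftrightarrow> f a < (f b :: 'b :: linorder)"
proof
  assume "comes_before \<tau> a b"
  then show "f a < f b"
    unfolding comes_before_def using assms(1) sorted_wrt_nth_less by blast
next
  assume "f a < f b"
  moreover obtain i j where "i < length \<tau>" "j < length \<tau>" "\<tau> ! i = a" "\<tau> ! j = b"
    using assms(2,3) by (auto simp: in_set_conv_nth)
  ultimately show "comes_before \<tau> a b"
    unfolding comes_before_def using assms(1) sorted_wrt_nth_less
    by (metis linorder_neqE_nat order.asym)
qed

lemma sorted_wrt_key_unique:
  fixes f :: "'a \<Rightarrow> 'b :: linorder"
  assumes "sorted_wrt (\<lambda>x y. f x < f y) xs" "sorted_wrt (\<lambda>x y. f x < f y) ys" "set xs = set ys"
  shows "xs = ys"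
  using assms
proof (induction xs arbitrary: ys)
  case Nil
  then show ?case by simp
next
  case (Cons x xs)
  obtain y ys' where ys: "ys = y # ys'"
    using Cons.prems(3) by (cases ys) auto
  have "x = y"
  proof (rule ccontr)
    assume "x \<noteq> y"
    then have "y \<in> set xs" "x \<in> set ys'"
      using Cons.prems(3) unfolding ys by auto
    then show False
      using Cons.prems(1,2) unfolding ys by (auto dest: order.asym)
  qed
  moreover have "x \<notin> set xs" "y \<notin> set ys'"
    using Cons.prems(1,2) unfolding ys by auto
  ultimately have "set xs = set ys'"
    using Cons.prems(3) unfolding ys by (simp add: insert_ident)
  then show ?case
    using Cons.IH Cons.prems(1,2) \<open>x = y\<close> unfolding ys by simp
qed

lemma distinct_if_sorted_wrt_key: "sorted_wrt (\<lambda>x y. f x < (f y :: 'b :: linorder)) xs \<Longrightarrow> distinct xs"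
  by (induction xs) auto

lemma sparse_ordering_iff:
  "sparse_ordering V A \<sigma> \<longleftrightarrow> is_ordering V \<sigma> \<and>
     (\<forall>e\<in>backward_arcs A \<sigma>. \<forall>e'\<in>backward_arcs A \<sigma>.
        {fst e, snd e} \<inter> {fst e', snd e'} \<noteq> {} \<longrightarrow> e = e')"
proof -
  have "finite (backward_arcs A \<sigma>)"
    by (rule finite_subset[of _ "set \<sigma> \<times> set \<sigma>"])
      (auto simp: backward_arcs_def dest: comes_before_in_set)
  then have fin: "finite {e \<in> backward_arcs A \<sigma>. fst e = v \<or> snd e = v}" for v
    by simp
  have ends: "fst e \<in> set \<sigma> \<and> snd e \<in> set \<sigma>" if "e \<in> backward_arcs A \<sigma>" for e
    using that by (auto simp: backward_arcs_def dest: comes_before_in_set)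
  show ?thesis
    unfolding sparse_ordering_def is_ordering_def card_le_Suc0_iff_eq[OF fin, folded One_nat_def]
    using ends by blast
qed

lemma U_arc_iff:
  "U_arc n x y \<longleftrightarrow> (x = Suc y \<and> 1 \<le> y \<and> x \<le> n) \<or> (1 \<le> x \<and> x + 2 \<le> y \<and> y \<le> n)"
  unfolding U_arc_def by (auto; presburger)

text \<open>Sorting by \<^term>\<open>rank b\<close> places every x with \<^term>\<open>odd x = b\<close> directly before x - 1, so
  that the backward arcs are exactly the v_(y+1) v_y with \<^term>\<open>odd y = b\<close>. The truncated value
  2 * 1 - 3 = 0 is harmless: v_1 comes first anyway.\<close>

definition rank :: "bool \<Rightarrow> nat \<Rightarrow> nat" where
  "rank b x = (if odd x = b then 2 * x - 3 else 2 * x)"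

lemma rank_less_Suc_iff: "1 \<le> x \<Longrightarrow> rank b x < rank b (Suc x) \<longleftrightarrow> odd x = b"
  unfolding rank_def by auto

lemma rank_Suc_less_iff: "1 \<le> x \<Longrightarrow> rank b (Suc x) < rank b x \<longleftrightarrow> odd x \<noteq> b"
  unfolding rank_def by auto

lemma rank_less_if_gap: "x + 2 \<le> y \<Longrightarrow> rank b x < rank b y"
  unfolding rank_def by auto

lemma rank_less_of_less: "1 \<le> x \<Longrightarrow> x < y \<Longrightarrow> (y = Suc x \<longrightarrow> odd x = b) \<Longrightarrow> rank b x < rank b y"
  unfolding rank_def by auto

abbreviation rank_sorted :: "bool \<Rightarrow> nat list \<Rightarrow> bool" where
  "rank_sorted b \<sigma> \<equiv> sorted_wrt (\<lambda>x y. rank b x < rank b y) \<sigma>"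

locale sparse_ordering_of_U =
  fixes n :: nat and \<sigma> :: "nat list"
  assumes n_ge_5: "5 \<le> n"
    and sparse: "sparse_ordering {1..n} (U_arc n) \<sigma>"
begin

abbreviation before :: "nat \<Rightarrow> nat \<Rightarrow> bool" (infix "\<prec>" 50) where
  "x \<prec> y \<equiv> comes_before \<sigma> x y"

lemma distinct: "distinct \<sigma>" and set_eq: "set \<sigma> = {1..n}"
  using sparse unfolding sparse_ordering_def is_ordering_def by auto

lemma before_asym: "x \<prec> y \<Longrightarrow> \<not> y \<prec> x"
  using comes_before_asym[OF distinct] .

lemma before_trans: "x \<prec> y \<Longrightarrow> y \<prec> z \<Longrightarrow> x \<prec> z"
  using comes_before_trans[OF distinct] .

lemma before_total: "x \<in> {1..n} \<Longrightarrow> y \<in> {1..n} \<Longrightarrow> x \<noteq> y \<Longrightarrow> x \<prec> y \<or> y \<prec> x"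
  using comes_before_total[of x \<sigma> y] set_eq by simp

lemma backward_arcs_disjoint:
  assumes "U_arc n x y" "y \<prec> x" "U_arc n x' y'" "y' \<prec> x'" "{x, y} \<inter> {x', y'} \<noteq> {}"
  shows "x' = x \<and> y' = y"
proof -
  have "(x, y) \<in> backward_arcs (U_arc n) \<sigma>" "(x', y') \<in> backward_arcs (U_arc n) \<sigma>"
    using assms(1-4) by (auto simp: backward_arcs_def)
  moreover have "\<forall>e\<in>backward_arcs (U_arc n) \<sigma>. \<forall>e'\<in>backward_arcs (U_arc n) \<sigma>.
      {fst e, snd e} \<inter> {fst e', snd e'} \<noteq> {} \<longrightarrow> e = e'"
    using sparse unfolding sparse_ordering_iff by blast
  ultimately show ?thesis
    using assms(5) by fastforce
qed

lemma forward_near_backward: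
  assumes "U_arc n x y" "y \<prec> x" "U_arc n a b" "{a, b} \<inter> {x, y} \<noteq> {}" "(a, b) \<noteq> (x, y)"
  shows "a \<prec> b"
proof -
  have "a \<in> {1..n}" "b \<in> {1..n}" "a \<noteq> b"
    using assms(3) by (auto simp: U_arc_iff)
  then show ?thesis
    using before_total backward_arcs_disjoint[OF assms(1,2,3)] assms(4,5) by blast
qed

lemma long_arc_forward:
  assumes "1 \<le> x" "x + 2 \<le> y" "y \<le> n"
  shows "x \<prec> y"
proof (rule ccontr)
  assume "\<not> x \<prec> y"
  then have yx_backward: "y \<prec> x"
    using before_total[of x y] assms by simp
  have arc: "U_arc n x y"
    using assms by (simp add: U_arc_iff)
  note fwd = forward_near_backward[OF arc yx_backward]
  have cycle: False if "y \<prec> u" "u \<prec> v" "v \<prec> y" for u v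
    using that before_trans before_asym by blast
  obtain w where w: "x = Suc w"
    using assms(1) by (cases x) auto
  consider "y < n" | "y = n" "1 \<le> w" | "y = n" "w = 0"
    using assms by linarith
  then show False
  proof cases
    case 1
    have "x \<prec> Suc y" "Suc y \<prec> y"
      using fwd[of x "Suc y"] fwd[of "Suc y" y] assms 1 by (simp_all add: U_arc_iff)
    then show False
      using cycle yx_backward before_trans by blast
  next
    case 2
    have "x \<prec> w" "w \<prec> y"
      using fwd[of x w] fwd[of w y] assms w 2 by (simp_all add: U_arc_iff)
    then show False
      using cycle yx_backward by blast
  next
    case 3
    have "x \<prec> 3" "3 \<prec> y"
      using fwd[of x 3] fwd[of 3 y] assms w 3 n_ge_5 by (simp_all add: U_arc_iff)
    then show False
      using cycle yx_backward by blast
  qed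
qed

lemma short_arcs_alternate:
  assumes "1 \<le> i" "i + 2 \<le> n"
  shows "i \<prec> Suc i \<longleftrightarrow> \<not> Suc i \<prec> Suc (Suc i)"
proof
  assume "i \<prec> Suc i"
  show "\<not> Suc i \<prec> Suc (Suc i)"
  proof
    assume "Suc i \<prec> Suc (Suc i)"
    have "Suc (Suc i) = Suc i"
      using backward_arcs_disjoint[OF _ \<open>i \<prec> Suc i\<close> _ \<open>Suc i \<prec> Suc (Suc i)\<close>] assms
      by (simp add: U_arc_iff)
    then show False by simp
  qed
next
  assume "\<not> Suc i \<prec> Suc (Suc i)"
  then have "Suc (Suc i) \<prec> Suc i"
    using before_total[of "Suc i" "Suc (Suc i)"] assms by simp
  moreover have "i \<prec> Suc (Suc i)"
    using long_arc_forward assms by simp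
  ultimately have "\<not> Suc i \<prec> i"
    using before_trans before_asym by blast
  then show "i \<prec> Suc i"
    using before_total[of i "Suc i"] assms by simp
qed

lemma short_arc_backward_iff: "1 \<le> i \<Longrightarrow> Suc i \<le> n \<Longrightarrow> i \<prec> Suc i \<longleftrightarrow> odd i = (1 \<prec> 2)"
proof (induction i)
  case 0
  then show ?case by simp
next
  case (Suc i)
  show ?case
  proof (cases "i = 0")
    case True
    then show ?thesis by (simp add: numeral_2_eq_2)
  next
    case False
    then have "i \<prec> Suc i \<longleftrightarrow> odd i = (1 \<prec> 2)"
      using Suc by simp
    moreover have "i \<prec> Suc i \<longleftrightarrow> \<not> Suc i \<prec> Suc (Suc i)"
      using short_arcs_alternate[of i] False Suc.prems by simp
    ultimately show ?thesis
      by auto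
  qed
qed

lemma before_imp_rank_less:
  assumes "x \<prec> y"
  shows "rank (1 \<prec> 2) x < rank (1 \<prec> 2) y"
proof -
  have x: "1 \<le> x" "x \<le> n" and y: "1 \<le> y" "y \<le> n"
    using comes_before_in_set[OF assms] set_eq by auto
  have "\<not> y \<prec> x"
    using assms by (rule before_asym)
  consider "y = Suc x" | "x = Suc y" | "x + 2 \<le> y" | "y + 2 \<le> x" | "x = y"
    by linarith
  then show ?thesis
  proof cases
    case 1
    then show ?thesis
      using assms short_arc_backward_iff[of x] rank_less_Suc_iff[of x] x y by simp
  next
    case 2
    then show ?thesis
      using \<open>\<not> y \<prec> x\<close> short_arc_backward_iff[of y] rank_Suc_less_iff[of y] x y by simp
  next
    case 3
    then show ?thesis
      by (rule rank_less_if_gap)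
  next
    case 4
    then show ?thesis
      using \<open>\<not> y \<prec> x\<close> long_arc_forward y x by simp
  next
    case 5
    then show ?thesis
      using assms \<open>\<not> y \<prec> x\<close> by simp
  qed
qed

lemma sorted_by_rank: "rank_sorted (1 \<prec> 2) \<sigma>"
  by (rule sorted_wrt_mono_rel[OF _ sorted_wrt_comes_before]) (rule before_imp_rank_less)

end

lemma sparse_ordering_U_if_rank_sorted:
  assumes set_eq: "set \<tau> = {1..n}" and sorted: "rank_sorted b \<tau>"
  shows "sparse_ordering {1..n} (U_arc n) \<tau>"
proof -
  have backward: "x = Suc y \<and> odd y = b" if "(x, y) \<in> backward_arcs (U_arc n) \<tau>" for x y
  proof -
    have arc: "U_arc n x y" and yx: "comes_before \<tau> y x"
      using that by (auto simp: backward_arcs_def)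
    have less: "rank b y < rank b x"
      using comes_before_sorted_key_iff[OF sorted, of y x] comes_before_in_set[OF yx] yx by simp
    from arc consider "x = Suc y" "1 \<le> y" | "x + 2 \<le> y"
      unfolding U_arc_iff by blast
    then show ?thesis
    proof cases
      case 1
      then show ?thesis
        using less rank_less_Suc_iff by simp
    next
      case 2
      then show ?thesis
        using less rank_less_if_gap[of x y b] by simp
    qed
  qed
  have "e = e'"
    if "e \<in> backward_arcs (U_arc n) \<tau>" "e' \<in> backward_arcs (U_arc n) \<tau>"
      "{fst e, snd e} \<inter> {fst e', snd e'} \<noteq> {}" for e e'
  proof -
    obtain x y x' y' where e: "e = (x, y)" "e' = (x', y')"
      by (cases e, cases e')
    then have "x = Suc y" "odd y = b" "x' = Suc y'" "odd y' = b"
      using that(1,2) backward by auto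
    then show ?thesis
      using that(3) e by auto
  qed
  moreover have "distinct \<tau>"
    using sorted by (rule distinct_if_sorted_wrt_key)
  ultimately show ?thesis
    unfolding sparse_ordering_iff is_ordering_def using set_eq by simp
qed

lemma sparse_ordering_U_iff:
  assumes "5 \<le> n"
  shows "sparse_ordering {1..n} (U_arc n) \<sigma> \<longleftrightarrow> set \<sigma> = {1..n} \<and> (\<exists>b. rank_sorted b \<sigma>)"
proof
  assume "sparse_ordering {1..n} (U_arc n) \<sigma>"
  then interpret sparse_ordering_of_U n \<sigma>
    using assms by unfold_locales
  show "set \<sigma> = {1..n} \<and> (\<exists>b. rank_sorted b \<sigma>)"
    using set_eq sorted_by_rank by blast
next
  assume "set \<sigma> = {1..n} \<and> (\<exists>b. rank_sorted b \<sigma>)"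
  then show "sparse_ordering {1..n} (U_arc n) \<sigma>"
    using sparse_ordering_U_if_rank_sorted by blast
qed

lemma sparse_orderings_of_U_eq:
  assumes "5 \<le> n"
    and set1: "set \<tau>\<^sub>1 = {1..n}" and sorted1: "rank_sorted True \<tau>\<^sub>1"
    and set0: "set \<tau>\<^sub>0 = {1..n}" and sorted0: "rank_sorted False \<tau>\<^sub>0"
  shows "{\<sigma>. sparse_ordering {1..n} (U_arc n) \<sigma>} = {\<tau>\<^sub>1, \<tau>\<^sub>0} \<and> \<tau>\<^sub>1 \<noteq> \<tau>\<^sub>0"
proof
  have "sparse_ordering {1..n} (U_arc n) \<sigma> \<longleftrightarrow> \<sigma> = \<tau>\<^sub>1 \<or> \<sigma> = \<tau>\<^sub>0" for \<sigma>
  proof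
    assume "sparse_ordering {1..n} (U_arc n) \<sigma>"
    then obtain b where set_eq: "set \<sigma> = {1..n}" and sorted: "rank_sorted b \<sigma>"
      using sparse_ordering_U_iff[OF assms(1)] by blast
    show "\<sigma> = \<tau>\<^sub>1 \<or> \<sigma> = \<tau>\<^sub>0"
    proof (cases b)
      case True
      then show ?thesis
        using sorted_wrt_key_unique[OF sorted, of \<tau>\<^sub>1] sorted1 set_eq set1 by simp
    next
      case False
      then show ?thesis
        using sorted_wrt_key_unique[OF sorted, of \<tau>\<^sub>0] sorted0 set_eq set0 by simp
    qed
  next
    assume "\<sigma> = \<tau>\<^sub>1 \<or> \<sigma> = \<tau>\<^sub>0"
    then show "sparse_ordering {1..n} (U_arc n) \<sigma>"
      using sparse_ordering_U_if_rank_sorted set1 sorted1 set0 sorted0 by blast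
  qed
  then show "{\<sigma>. sparse_ordering {1..n} (U_arc n) \<sigma>} = {\<tau>\<^sub>1, \<tau>\<^sub>0}"
    by blast
next
  have "1 \<in> set \<tau>\<^sub>1" "2 \<in> set \<tau>\<^sub>1" "1 \<in> set \<tau>\<^sub>0" "2 \<in> set \<tau>\<^sub>0"
    using assms by auto
  then have "comes_before \<tau>\<^sub>1 1 2" "\<not> comes_before \<tau>\<^sub>0 1 2"
    using comes_before_sorted_key_iff[OF sorted1] comes_before_sorted_key_iff[OF sorted0]
    by (simp_all add: rank_def)
  then show "\<tau>\<^sub>1 \<noteq> \<tau>\<^sub>0"
    by blast
qed

lemma set_P_blocks: "set (concat (map (\<lambda>i. P_block (2 * i + c)) [a..<b])) = {2 * a + c..<2 * b + c}"
proof (induction b)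
  case 0
  then show ?case by simp
next
  case (Suc b)
  show ?case
  proof (cases "a \<le> b")
    case True
    have "{2 * a + c..<2 * Suc b + c} = {2 * a + c..<2 * b + c} \<union> {2 * b + c, Suc (2 * b + c)}"
      using True by auto
    then show ?thesis
      using Suc.IH True by (simp add: P_block_def insert_commute)
  next
    case False
    then show ?thesis by simp
  qed
qed

lemma rank_sorted_P_blocks:
  assumes "1 \<le> 2 * a + c"
  shows "rank_sorted (even c) (concat (map (\<lambda>i. P_block (2 * i + c)) [a..<b]))"
proof (induction b)
  case 0
  then show ?case by simp
next
  case (Suc b)
  show ?case
  proof (cases "a \<le> b")
    case True
    have block: "rank_sorted (even c) (P_block (2 * b + c))"
      using rank_Suc_less_iff[of "2 * b + c" "even c"] True assms by (simp add: P_block_def)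
    have across: "rank (even c) x < rank (even c) y"
      if "x \<in> {2 * a + c..<2 * b + c}" "y \<in> set (P_block (2 * b + c))" for x y
    proof (rule rank_less_of_less)
      show "y = Suc x \<longrightarrow> odd x = even c"
        using that by (auto simp: P_block_def) presburger+
    qed (use that assms in \<open>auto simp: P_block_def\<close>)
    have snoc_block: "concat (map (\<lambda>i. P_block (2 * i + c)) [a..<Suc b])
        = concat (map (\<lambda>i. P_block (2 * i + c)) [a..<b]) @ P_block (2 * b + c)"
      using True by simp
    show ?thesis
      unfolding snoc_block sorted_wrt_append set_P_blocks using Suc.IH block across by blast
  next
    case False
    then show ?thesis by simp
  qed
qed

lemma Pi_even_rank_sorted:
  assumes "even n" "2 \<le> n"
  shows "set (Pi_even n) = {1..n}" "rank_sorted True (Pi_even n)"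
proof -
  let ?B = "concat (map (\<lambda>i. P_block (2 * i)) [1..<n div 2])"
  have set_B: "set ?B = {2..<n}"
    unfolding set_P_blocks[where c = 0, unfolded add_0_right] using assms by simp
  have "rank_sorted True ?B"
    using rank_sorted_P_blocks[of 1 0] by simp
  moreover have "rank True 1 < rank True y" if "y \<in> {2..n}" for y
    using that by (intro rank_less_of_less) auto
  moreover have "rank True x < rank True n" if "x \<in> {2..<n}" for x
    using that assms by (intro rank_less_of_less) auto
  ultimately show "rank_sorted True (Pi_even n)"
    unfolding Pi_even_def sorted_wrt_append using set_B assms by auto
  show "set (Pi_even n) = {1..n}"
    unfolding Pi_even_def using set_B assms by auto
qed

lemma Pi_1n_even_rank_sorted:
  assumes "even n"
  shows "set (Pi_1n_even n) = {1..n}" "rank_sorted False (Pi_1n_even n)"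
  using set_P_blocks[of 1 0 "n div 2"] rank_sorted_P_blocks[of 0 1 "n div 2"] assms
  by (auto simp: Pi_1n_even_def)

lemma Pi_1_odd_rank_sorted:
  assumes "odd n"
  shows "set (Pi_1_odd n) = {1..n}" "rank_sorted False (Pi_1_odd n)"
proof -
  let ?B = "concat (map (\<lambda>i. P_block (2 * i + 1)) [0..<n div 2])"
  have set_B: "set ?B = {1..<n}"
    unfolding set_P_blocks using assms by simp
  have "rank_sorted False ?B"
    using rank_sorted_P_blocks[of 0 1] by simp
  moreover have "rank False x < rank False n" if "x \<in> {1..<n}" for x
    using that assms by (intro rank_less_of_less) auto
  ultimately show "rank_sorted False (Pi_1_odd n)"
    unfolding Pi_1_odd_def sorted_wrt_append using set_B by auto
  show "set (Pi_1_odd n) = {1..n}"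
    unfolding Pi_1_odd_def using set_B odd_pos[OF assms] by auto
qed

lemma Pi_n_odd_rank_sorted:
  assumes "odd n"
  shows "set (Pi_n_odd n) = {1..n}" "rank_sorted True (Pi_n_odd n)"
proof -
  let ?B = "concat (map (\<lambda>i. P_block (2 * i)) [1..<n div 2 + 1])"
  have set_B: "set ?B = {2..n}"
    unfolding set_P_blocks[where c = 0, unfolded add_0_right] using assms by auto
  have "rank_sorted True ?B"
    using rank_sorted_P_blocks[of 1 0 "n div 2 + 1"] by (simp del: upt_Suc)
  moreover have "rank True 1 < rank True y" if "y \<in> {2..n}" for y
    using that by (intro rank_less_of_less) auto
  ultimately show "rank_sorted True (Pi_n_odd n)"
    unfolding Pi_n_odd_def sorted_wrt_append using set_B by auto
  show "set (Pi_n_odd n) = {1..n}"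
    unfolding Pi_n_odd_def using set_B odd_pos[OF assms] by auto
qed

theorem mainTheorem5:
  fixes n :: nat
  assumes "n > 4"
  shows "(even n \<longrightarrow> {\<sigma>. sparse_ordering {1..n} (U_arc n) \<sigma>} = {Pi_even n, Pi_1n_even n}
                        \<and> Pi_even n \<noteq> Pi_1n_even n) \<and>
         (odd n \<longrightarrow> {\<sigma>. sparse_ordering {1..n} (U_arc n) \<sigma>} = {Pi_1_odd n, Pi_n_odd n}
                        \<and> Pi_1_odd n \<noteq> Pi_n_odd n)"
proof -
  have n: "5 \<le> n"
    using assms by simp
  have "{\<sigma>. sparse_ordering {1..n} (U_arc n) \<sigma>} = {Pi_even n, Pi_1n_even n} \<and> Pi_even n \<noteq> Pi_1n_even n"
    if "even n"
    using sparse_orderings_of_U_eq[OF n Pi_even_rank_sorted[OF that] Pi_1n_even_rank_sorted[OF that]] n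
    by simp
  moreover have "{\<sigma>. sparse_ordering {1..n} (U_arc n) \<sigma>} = {Pi_1_odd n, Pi_n_odd n} \<and> Pi_1_odd n \<noteq> Pi_n_odd n"
    if "odd n"
    using sparse_orderings_of_U_eq[OF n Pi_n_odd_rank_sorted[OF that] Pi_1_odd_rank_sorted[OF that]]
    by (metis insert_commute)
  ultimately show ?thesis
    by blast
qed

end
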